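(* There exist an environment $E$ and a total preorder $\succeq$ on $\Pi^E$ such that $\succeq\in\mathrm{Ord}_{\mathrm{RM}}(E)\cap\mathrm{Ord}_{\mathrm{ONMR}}(E)\cap\mathrm{Ord}_{\mathrm{LTL}}(E)$ but $\succeq\notin\mathrm{Ord}_{\mathrm{MR}}(E)\cup\mathrm{Ord}_{\mathrm{RRL}}(E)$.
   Context: An environment is a tuple $E=(\mathcal S,\mathcal A,\mathcal T,\mathcal I)$ where $\mathcal S,\mathcal A$ are finite nonempty sets, $\mathcal T:\mathcal S\times\mathcal A\to\Delta(\mathcal S)$ and $\mathcal I\in\Delta(\mathcal S)$. A policy is a map $\pi:\mathcal S\to\Delta(\mathcal A)$ (stationary, possibly stochastic); $\Pi^E$ denotes the set of all policies. A trajectory $\xi=(s_0,a_0,s_1,a_1,\dots)\in\Xi:=\mathcal S\times(\mathcal A\times\mathcal S)^\omega$ is generated under $\pi$ by $s_0\sim\mathcal I$, $a_t\sim\pi(s_t)$, $s_{t+1}\sim\mathcal T(s_t,a_t)$; $\mathbb E^\pi_\xi$ denotes expectation under this distribution. An objective-specification formalism $X$ assigns to each environment $E$ a set of objective specifications, each inducing a total preorder $\succeq$ on $\Pi^E$; $\mathrm{Ord}_X(E)$ is the set of total preorders so induced. A specification defining a scalar $J:\Pi^E\to\mathbb R$ induces $\pi_1\succeq\pi_2\iff J(\pi_1)\ge J(\pi_2)$. MR: specification $(\mathcal R,\gamma)$, $\mathcal R:\mathcal S\times\mathcal A\times\mathcal S\to\mathbb R$, $\gamma\in[0,1)$, $J(\pi)=\mathbb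 E^\pi_\xi[\sum_{t=0}^\infty\gamma^t\mathcal R(s_t,a_t,s_{t+1})]$. RRL: specification $(\mathcal R,\alpha,F,\gamma)$ with $\mathcal R:\mathcal S\times\mathcal A\times\mathcal S\to\mathbb R$, $\alpha\in\mathbb R$, $F:\Delta(\mathcal A)\to\mathbb R$, $\gamma\in[0,1)$; $J(\pi)=\mathbb E^\pi_\xi[\sum_{t=0}^\infty\gamma^t(\mathcal R(s_t,a_t,s_{t+1})-\alpha F(\pi(s_t)))]$. ONMR: specification $(\mathcal R,f,\gamma)$ with $\mathcal R:\mathcal S\times\mathcal A\times\mathcal S\to\mathbb R$, $f:\mathbb R\to\mathbb R$, $\gamma\in[0,1)$; $J(\pi)=f\big(\mathbb E^\pi_\xi[\sum_{t=0}^\infty\gamma^t\mathcal R(s_t,a_t,s_{t+1})]\big)$. RM (reward machines): specification $(U,u_0,\delta_U,\delta_{\mathcal R},\gamma)$ with $U$ a finite set, $u_0\in U$, $\delta_U:U\times\mathcal S\times\mathcal A\times\mathcal S\to U$, $\delta_{\mathcal R}:U\times U\to(\mathcal S\times\mathcal A\times\mathcal S\to\mathbb R)$, $\gamma\in[0,1)$; along a trajectory $u_{t+1}=\delta_U(u_t,s_t,a_t,s_{t+1})$ and $J(\pi)=\mathbb E^\pi_\xi[\sum_{t=0}^\infty\gamma^t\,\delta_{\mathcal R}(u_t,u_{t+1})(s_t,a_t,s_{t+1})]$. LTL: specification $(\varphi)$ with $\varphi$ a linear temporal logic formula whose atomic propositions are the transitions $(s,a,s')\in\mathcal S\times\mathcal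 A\times\mathcal S$, built with $\neg,\lor,\land,\to$ and the temporal operators $\bigcirc$ (next), $\square$ (always), $\lozenge$ (eventually), $\mathcal U$ (until). Semantics on a trajectory $\xi$ at time $t$: an atomic proposition $(s,a,s')$ holds iff $(s_t,a_t,s_{t+1})=(s,a,s')$; $\bigcirc\psi$ holds iff $\psi$ holds at $t+1$; $\square\psi$ iff $\psi$ holds at every $t'\ge t$; $\lozenge\psi$ iff $\psi$ holds at some $t'\ge t$; $\psi\,\mathcal U\,\chi$ iff there is $t'\ge t$ with $\chi$ holding at $t'$ and $\psi$ holding at every $t''$ with $t\le t''<t'$; Boolean connectives as usual. $\varphi(\xi)=1$ if $\varphi$ holds at time $0$ and $0$ otherwise; $J(\pi)=\mathbb E^\pi_\xi[\varphi(\xi)]$. *)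

theory Defs
  imports "HOL-Probability.Probability"
begin

section \<open>Environments (finite carriers encoded inside nat)\<close>

record env =
  St :: "nat set"
  Ac :: "nat set"
  Tr :: "nat \<Rightarrow> nat \<Rightarrow> nat pmf"
  In :: "nat pmf"

definition valid_env :: "env \<Rightarrow> bool" where
  "valid_env E \<longleftrightarrow> finite (St E) \<and> St E \<noteq> {} \<and> finite (Ac E) \<and> Ac E \<noteq> {}
     \<and> (\<forall>s\<in>St E. \<forall>a\<in>Ac E. set_pmf (Tr E s a) \<subseteq> St E)
     \<and> set_pmf (In E) \<subseteq> St E"

type_synonym policy = "nat \<Rightarrow> nat pmf"

definition Pol :: "env \<Rightarrow> policy set" where
  "Pol E = {\<pi>. \<forall>s\<in>St E. set_pmf (\<pi> s) \<subseteq> Ac E}"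

text \<open>A trajectory (s0,a0,s1,a1,...) is encoded as the stream of pairs (s_t,a_t).\<close>
type_synonym traj = "(nat \<times> nat) stream"

definition st :: "traj \<Rightarrow> nat \<Rightarrow> nat" where "st \<omega> t = fst (\<omega> !! t)"
definition ac :: "traj \<Rightarrow> nat \<Rightarrow> nat" where "ac \<omega> t = snd (\<omega> !! t)"

text \<open>Probability of a finite prefix [(s0,a0),...,(s_{n-1},a_{n-1})], with d the
  distribution of the first state of the prefix.\<close>
fun pref_prob :: "policy \<Rightarrow> (nat \<Rightarrow> nat \<Rightarrow> nat pmf) \<Rightarrow> nat pmf \<Rightarrow> (nat \<times> nat) list \<Rightarrow> real" where
  "pref_prob \<pi> T d [] = 1"
| "pref_prob \<pi> T d ((s, a) # xs) = pmf d s * pmf (\<pi> s) a * pref_prob \<pi> T (T s a) xs"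

text \<open>The trajectory distribution under policy pi: the (unique, by Ionescu-Tulcea / pi-lambda)
  probability measure on trajectory space whose finite-dimensional marginals are given by
  s0 ~ I, a_t ~ pi(s_t), s_{t+1} ~ T(s_t,a_t).\<close>
definition traj_meas :: "env \<Rightarrow> policy \<Rightarrow> traj measure" where
  "traj_meas E \<pi> = (SOME M. prob_space M
      \<and> sets M = sets (stream_space (count_space UNIV))
      \<and> (\<forall>xs. emeasure M {\<omega> \<in> space M. stake (length xs) \<omega> = xs}
               = ennreal (pref_prob \<pi> (Tr E) (In E) xs)))"

definition rew_in :: "env \<Rightarrow> (nat \<Rightarrow> nat \<Rightarrow> nat \<Rightarrow> real) \<Rightarrow> nat \<Rightarrow> nat \<Rightarrow> nat \<Rightarrow> real" where
  "rew_in E R s a s' = (if s \<in> St E \<and> a \<in> Ac E \<and> s' \<in> St E then R s a s' else 0)"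

definition J_MR :: "env \<Rightarrow> (nat \<Rightarrow> nat \<Rightarrow> nat \<Rightarrow> real) \<Rightarrow> real \<Rightarrow> policy \<Rightarrow> real" where
  "J_MR E R \<gamma> \<pi> = (\<integral>\<omega>. (\<Sum>t. \<gamma> ^ t * rew_in E R (st \<omega> t) (ac \<omega> t) (st \<omega> (Suc t))) \<partial>traj_meas E \<pi>)"

definition J_RRL :: "env \<Rightarrow> (nat \<Rightarrow> nat \<Rightarrow> nat \<Rightarrow> real) \<Rightarrow> real \<Rightarrow> (nat pmf \<Rightarrow> real) \<Rightarrow> real
                     \<Rightarrow> policy \<Rightarrow> real" where
  "J_RRL E R \<alpha> F \<gamma> \<pi> = (\<integral>\<omega>. (\<Sum>t. \<gamma> ^ t * (rew_in E R (st \<omega> t) (ac \<omega> t) (st \<omega> (Suc t))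
        - \<alpha> * (if st \<omega> t \<in> St E then F (\<pi> (st \<omega> t)) else 0))) \<partial>traj_meas E \<pi>)"

definition J_ONMR :: "env \<Rightarrow> (nat \<Rightarrow> nat \<Rightarrow> nat \<Rightarrow> real) \<Rightarrow> (real \<Rightarrow> real) \<Rightarrow> real \<Rightarrow> policy \<Rightarrow> real" where
  "J_ONMR E R f \<gamma> \<pi> = f (J_MR E R \<gamma> \<pi>)"

fun rm_state :: "nat \<Rightarrow> (nat \<Rightarrow> nat \<Rightarrow> nat \<Rightarrow> nat \<Rightarrow> nat) \<Rightarrow> traj \<Rightarrow> nat \<Rightarrow> nat" where
  "rm_state u0 dU \<omega> 0 = u0"
| "rm_state u0 dU \<omega> (Suc t) = dU (rm_state u0 dU \<omega> t) (st \<omega> t) (ac \<omega> t) (st \<omega> (Suc t))"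

definition J_RM :: "env \<Rightarrow> nat \<Rightarrow> (nat \<Rightarrow> nat \<Rightarrow> nat \<Rightarrow> nat \<Rightarrow> nat)
     \<Rightarrow> (nat \<Rightarrow> nat \<Rightarrow> (nat \<Rightarrow> nat \<Rightarrow> nat \<Rightarrow> real)) \<Rightarrow> real \<Rightarrow> policy \<Rightarrow> real" where
  "J_RM E u0 dU dR \<gamma> \<pi> = (\<integral>\<omega>. (\<Sum>t. \<gamma> ^ t *
       rew_in E (dR (rm_state u0 dU \<omega> t) (rm_state u0 dU \<omega> (Suc t))) (st \<omega> t) (ac \<omega> t) (st \<omega> (Suc t)))
     \<partial>traj_meas E \<pi>)"

datatype 'p ltlf =
    Atom 'p
  | NotF "'p ltlf"
  | OrF "'p ltlf" "'p ltlf"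
  | AndF "'p ltlf" "'p ltlf"
  | ImpF "'p ltlf" "'p ltlf"
  | NextF "'p ltlf"
  | AlwaysF "'p ltlf"
  | EventuallyF "'p ltlf"
  | UntilF "'p ltlf" "'p ltlf"

fun holds :: "(nat \<times> nat \<times> nat) ltlf \<Rightarrow> traj \<Rightarrow> nat \<Rightarrow> bool" where
  "holds (Atom p) \<omega> t \<longleftrightarrow> (st \<omega> t, ac \<omega> t, st \<omega> (Suc t)) = p"
| "holds (NotF \<phi>) \<omega> t \<longleftrightarrow> \<not> holds \<phi> \<omega> t"
| "holds (OrF \<phi> \<psi>) \<omega> t \<longleftrightarrow> holds \<phi> \<omega> t \<or> holds \<psi> \<omega> t"
| "holds (AndF \<phi> \<psi>) \<omega> t \<longleftrightarrow> holds \<phi> \<omega> t \<and> holds \<psi> \<omega> t"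
| "holds (ImpF \<phi> \<psi>) \<omega> t \<longleftrightarrow> (holds \<phi> \<omega> t \<longrightarrow> holds \<psi> \<omega> t)"
| "holds (NextF \<phi>) \<omega> t \<longleftrightarrow> holds \<phi> \<omega> (Suc t)"
| "holds (AlwaysF \<phi>) \<omega> t \<longleftrightarrow> (\<forall>t'\<ge>t. holds \<phi> \<omega> t')"
| "holds (EventuallyF \<phi>) \<omega> t \<longleftrightarrow> (\<exists>t'\<ge>t. holds \<phi> \<omega> t')"
| "holds (UntilF \<phi> \<psi>) \<omega> t \<longleftrightarrow> (\<exists>t'\<ge>t. holds \<psi> \<omega> t' \<and> (\<forall>t''. t \<le> t'' \<and> t'' < t' \<longrightarrow> holds \<phi> \<omega> t''))"

definition J_LTL :: "env \<Rightarrow> (nat \<times> nat \<times> nat) ltlf \<Rightarrow> policy \<Rightarrow> real" where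
  "J_LTL E \<phi> \<pi> = (\<integral>\<omega>. (if holds \<phi> \<omega> 0 then 1 else 0) \<partial>traj_meas E \<pi>)"

type_synonym pol_order = "(policy \<times> policy) set"

definition induced_ord :: "env \<Rightarrow> (policy \<Rightarrow> real) \<Rightarrow> pol_order" where
  "induced_ord E J = {(\<pi>1, \<pi>2). \<pi>1 \<in> Pol E \<and> \<pi>2 \<in> Pol E \<and> J \<pi>1 \<ge> J \<pi>2}"

definition total_preorder_on :: "policy set \<Rightarrow> pol_order \<Rightarrow> bool" where
  "total_preorder_on P r \<longleftrightarrow> r \<subseteq> P \<times> P \<and> refl_on P r \<and> trans r \<and> total_on P r"

definition Ord_MR :: "env \<Rightarrow> pol_order set" where
  "Ord_MR E = {induced_ord E (J_MR E R \<gamma>) | R \<gamma>. 0 \<le> \<gamma> \<and> \<gamma> < 1}"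

definition Ord_RRL :: "env \<Rightarrow> pol_order set" where
  "Ord_RRL E = {induced_ord E (J_RRL E R \<alpha> F \<gamma>) | R \<alpha> F \<gamma>. 0 \<le> \<gamma> \<and> \<gamma> < 1}"

definition Ord_ONMR :: "env \<Rightarrow> pol_order set" where
  "Ord_ONMR E = {induced_ord E (J_ONMR E R f \<gamma>) | R f \<gamma>. 0 \<le> \<gamma> \<and> \<gamma> < 1}"

definition Ord_RM :: "env \<Rightarrow> pol_order set" where
  "Ord_RM E = {induced_ord E (J_RM E u0 dU dR \<gamma>) | U u0 dU dR \<gamma>.
      finite U \<and> u0 \<in> U
      \<and> (\<forall>u\<in>U. \<forall>s\<in>St E. \<forall>a\<in>Ac E. \<forall>s'\<in>St E. dU u s a s' \<in> U)
      \<and> 0 \<le> \<gamma> \<and> \<gamma> < 1}"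

definition Ord_LTL :: "env \<Rightarrow> pol_order set" where
  "Ord_LTL E = {induced_ord E (J_LTL E \<phi>) | \<phi>. set_ltlf \<phi> \<subseteq> St E \<times> Ac E \<times> St E}"

end

theory Submission
  imports Defs
begin

(* Take two states and two actions, and let every transition lead to a fair coin flip between
   the states, independently of the past.  The trajectory is then an i.i.d. sequence of
   state-action pairs, and a policy matters only through the probability x of playing action 1.
   The LTL formula "play 1, then play 0" holds with probability x (1 - x); a reward machine that
   pays in the step after an action 1 reproduces it, and so does f (J) for the Markov reward
   "action 1 was played" with f y = y (1 - y).
   Under any (regularised) Markov reward, by stationarity the value of the deterministic policy
   playing p in state 0 and q in state 1 is additively separable, u p + v q.  The LTL order,
   however, makes (0,0) ~ (1,1) strictly worse than (0,1) ~ (1,0), an XOR pattern that no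
   separable function realises. *)

lemma total_preorder_on_induced_ord: "total_preorder_on (Pol E) (induced_ord E J)"
  by (auto simp: total_preorder_on_def induced_ord_def refl_on_def trans_def total_on_def)

lemma induced_ord_cmult:
  assumes "\<And>\<pi>. \<pi> \<in> Pol E \<Longrightarrow> J1 \<pi> = c * J2 \<pi>" and "c > 0"
  shows "induced_ord E J1 = induced_ord E J2"
  using assms by (auto simp: induced_ord_def)

lemma induced_ord_eq_iff:
  assumes "induced_ord E J1 = induced_ord E J2" and "\<pi>1 \<in> Pol E" and "\<pi>2 \<in> Pol E"
  shows "J1 \<pi>2 \<le> J1 \<pi>1 \<longleftrightarrow> J2 \<pi>2 \<le> J2 \<pi>1"
  using assms by (auto simp: induced_ord_def set_eq_iff)

lemma Ord_MR_subset_Ord_RRL: "Ord_MR E \<subseteq> Ord_RRL E"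
proof -
  have "J_MR E R \<gamma> = J_RRL E R 0 (\<lambda>_. 0) \<gamma>" for R \<gamma>
    by (rule ext) (simp add: J_MR_def J_RRL_def)
  then show ?thesis
    unfolding Ord_MR_def Ord_RRL_def by fastforce
qed

section \<open>Streams of independent identically distributed steps\<close>

lemma sets_stream_space_pmf:
  "sets (stream_space (measure_pmf D)) = sets (stream_space (count_space UNIV))"
  by (rule sets_stream_space_cong) simp

lemma space_stream_space_pmf: "space (stream_space (measure_pmf D)) = UNIV"
  by (simp add: space_stream_space)

lemma sstart_UNIV: "sstart UNIV xs = {\<omega>. stake (length xs) \<omega> = xs}"
proof -
  have "\<omega> \<in> sstart UNIV xs \<longleftrightarrow> stake (length xs) \<omega> = xs" for \<omega>
    by (induction xs arbitrary: \<omega>) (simp_all add: streams_UNIV)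
  then show ?thesis by blast
qed

lemma emeasure_stream_space_pmf_stake:
  "emeasure (stream_space (measure_pmf D))
     {\<omega> \<in> space (stream_space (measure_pmf D)). stake (length xs) \<omega> = xs}
   = ennreal (prod_list (map (pmf D) xs))"
proof (induction xs)
  case Nil
  interpret S: prob_space "stream_space (measure_pmf D)"
    by (rule prob_space.prob_space_stream_space) (rule prob_space_measure_pmf)
  show ?case using S.emeasure_space_1 by simp
next
  case (Cons x xs)
  let ?S = "stream_space (measure_pmf D)"
  let ?C = "\<lambda>ys. {\<omega> \<in> space ?S. stake (length ys) \<omega> = ys}"
  have "?C (x # xs) \<in> sets ?S"
    using sets_sstart[of UNIV "x # xs"]
    by (simp add: sets_stream_space_pmf space_stream_space_pmf sstart_UNIV)
  then have "emeasure ?S (?C (x # xs))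
      = (\<integral>\<^sup>+t. emeasure ?S {\<omega> \<in> space ?S. t ## \<omega> \<in> ?C (x # xs)} \<partial>measure_pmf D)"
    by (rule prob_space.emeasure_stream_space[OF prob_space_measure_pmf])
  also have "\<dots> = (\<integral>\<^sup>+t. emeasure ?S (?C xs) * indicator {x} t \<partial>measure_pmf D)"
    by (rule nn_integral_cong) (auto simp: space_stream_space_pmf split: split_indicator)
  also have "\<dots> = emeasure ?S (?C xs) * emeasure (measure_pmf D) {x}"
    by (simp add: nn_integral_cmult_indicator)
  also have "\<dots> = ennreal (prod_list (map (pmf D) (x # xs)))"
    using Cons by (simp add: emeasure_pmf_single ennreal_mult' mult.commute prod_list_nonneg)
  finally show ?case .
qed

lemma distr_stream_space_pmf_stl:
  "distr (stream_space (measure_pmf D)) (stream_space (measure_pmf D)) stl = stream_space (measure_pmf D)"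
  (is "distr ?S ?S stl = ?S")
proof (rule measure_eqI)
  fix A assume "A \<in> sets (distr ?S ?S stl)"
  then have A: "A \<in> sets ?S" by simp
  have "emeasure (distr ?S ?S stl) A = emeasure ?S (stl -` A \<inter> space ?S)"
    by (rule emeasure_distr[OF measurable_stl A])
  also have "\<dots> = (\<integral>\<^sup>+t. emeasure ?S {x \<in> space ?S. t ## x \<in> stl -` A \<inter> space ?S} \<partial>measure_pmf D)"
    by (rule prob_space.emeasure_stream_space[OF prob_space_measure_pmf
          measurable_sets[OF measurable_stl A]])
  also have "\<dots> = emeasure ?S A"
    by (simp add: space_stream_space_pmf)
  finally show "emeasure (distr ?S ?S stl) A = emeasure ?S A" .
qed simp

lemma distr_stream_space_pmf_sdrop:
  "distr (stream_space (measure_pmf D)) (stream_space (measure_pmf D)) (sdrop n) = stream_space (measure_pmf D)"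
proof (induction n)
  case 0
  have "sdrop 0 = (\<lambda>x. x)" by (rule ext) simp
  then show ?case by (simp add: distr_id)
next
  case (Suc n)
  have "sdrop (Suc n) = sdrop n \<circ> stl" by (rule ext) simp
  then show ?case
    by (metis distr_distr[symmetric] measurable_sdrop measurable_stl distr_stream_space_pmf_stl Suc)
qed

definition first3 :: "'a stream \<Rightarrow> 'a \<times> 'a \<times> 'a" where
  "first3 \<omega> = (\<omega> !! 0, \<omega> !! 1, \<omega> !! 2)"

lemma vimage_first3: "first3 -` {(x, y, z)} = {\<omega>. stake (length [x, y, z]) \<omega> = [x, y, z]}"
  by (auto simp: first3_def numeral_2_eq_2)

lemma measurable_first3:
  fixes D :: "'a :: countable pmf"
  shows "first3 \<in> measurable (stream_space (measure_pmf D)) (count_space UNIV)"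
proof (subst measurable_count_space_eq2_countable, safe)
  fix a :: "'a \<times> 'a \<times> 'a"
  obtain x y z where "a = (x, y, z)" by (cases a) auto
  then have "first3 -` {a} \<inter> space (stream_space (measure_pmf D)) = sstart UNIV [x, y, z]"
    by (simp add: vimage_first3 space_stream_space_pmf sstart_UNIV)
  then show "first3 -` {a} \<inter> space (stream_space (measure_pmf D)) \<in> sets (stream_space (measure_pmf D))"
    by (simp add: sets_stream_space_pmf)
qed simp

lemma distr_first3:
  fixes D :: "'a :: countable pmf"
  shows "distr (stream_space (measure_pmf D)) (count_space UNIV) first3
     = measure_pmf (pair_pmf D (pair_pmf D D))"
proof (rule measure_eqI_countable[of _ UNIV])
  let ?S = "stream_space (measure_pmf D)"
  fix a :: "'a \<times> 'a \<times> 'a"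
  obtain x y z where a: "a = (x, y, z)" by (cases a) auto
  have "emeasure (distr ?S (count_space UNIV) first3) {a} = emeasure ?S (first3 -` {a} \<inter> space ?S)"
    by (rule emeasure_distr[OF measurable_first3]) simp
  also have "\<dots> = emeasure ?S {\<omega> \<in> space ?S. stake (length [x, y, z]) \<omega> = [x, y, z]}"
    unfolding a vimage_first3 by (simp add: Int_commute Collect_conj_eq space_stream_space_pmf)
  also have "\<dots> = ennreal (pmf D x * (pmf D y * pmf D z))"
    by (subst emeasure_stream_space_pmf_stake) simp
  also have "\<dots> = emeasure (measure_pmf (pair_pmf D (pair_pmf D D))) {a}"
    by (simp add: a emeasure_pmf_single pmf_pair)
  finally show "emeasure (distr ?S (count_space UNIV) first3) {a}
      = emeasure (measure_pmf (pair_pmf D (pair_pmf D D))) {a}" .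
qed simp_all

lemma integral_first3:
  fixes D :: "'a :: countable pmf" and h :: "'a \<times> 'a \<times> 'a \<Rightarrow> real"
  shows "(\<integral>\<omega>. h (first3 \<omega>) \<partial>stream_space (measure_pmf D))
       = (\<integral>y. h y \<partial>measure_pmf (pair_pmf D (pair_pmf D D)))"
  by (simp add: integral_distr[symmetric, OF measurable_first3] distr_first3)

lemma integral_discounted_shift:
  fixes G :: "'a stream \<Rightarrow> real"
  assumes [measurable]: "G \<in> borel_measurable (stream_space (measure_pmf D))"
    and bounded: "\<And>\<omega>. \<bar>G \<omega>\<bar> \<le> K" and \<gamma>: "0 \<le> \<gamma>" "\<gamma> < 1"
  shows "(\<integral>\<omega>. (\<Sum>t. \<gamma> ^ t * G (sdrop t \<omega>)) \<partial>stream_space (measure_pmf D))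
         = (\<integral>\<omega>. G \<omega> \<partial>stream_space (measure_pmf D)) / (1 - \<gamma>)"
proof -
  let ?S = "stream_space (measure_pmf D)"
  interpret S: prob_space ?S
    by (rule prob_space.prob_space_stream_space) (rule prob_space_measure_pmf)
  let ?c = "\<integral>\<omega>. G \<omega> \<partial>?S"
  have term_bound: "\<bar>\<gamma> ^ t * G (sdrop t \<omega>)\<bar> \<le> \<gamma> ^ t * K" for t \<omega>
    using bounded[of "sdrop t \<omega>"] \<gamma> by (simp add: abs_mult mult_left_mono)
  have integrable: "integrable ?S (\<lambda>\<omega>. \<gamma> ^ t * G (sdrop t \<omega>))" for t
    by (rule S.integrable_const_bound[where B = "\<gamma> ^ t * K"]) (use term_bound in auto)
  have summable_bound: "summable (\<lambda>t. \<gamma> ^ t * K)"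
    using \<gamma> by (intro summable_mult2) simp
  have "(\<integral>\<omega>. norm (\<gamma> ^ t * G (sdrop t \<omega>)) \<partial>?S) \<le> \<gamma> ^ t * K" for t
    using integral_mono[of ?S "\<lambda>\<omega>. norm (\<gamma> ^ t * G (sdrop t \<omega>))" "\<lambda>_. \<gamma> ^ t * K"]
      integrable term_bound by (simp add: S.prob_space)
  then have summable_integrals: "summable (\<lambda>t. (\<integral>\<omega>. norm (\<gamma> ^ t * G (sdrop t \<omega>)) \<partial>?S))"
    by (intro summable_comparison_test[OF _ summable_bound]) auto
  have shift_invariant: "(\<integral>\<omega>. G (sdrop t \<omega>) \<partial>?S) = ?c" for t
    using integral_distr[of "sdrop t" ?S ?S G]
    by (simp add: distr_stream_space_pmf_sdrop)
  have "(\<integral>\<omega>. (\<Sum>t. \<gamma> ^ t * G (sdrop t \<omega>)) \<partial>?S) = (\<Sum>t. (\<integral>\<omega>. \<gamma> ^ t * G (sdrop t \<omega>) \<partial>?S))"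
    by (rule integral_suminf[OF integrable _ summable_integrals])
      (auto intro!: AE_I2 summable_comparison_test[OF _ summable_bound] simp: term_bound)
  also have "\<dots> = (\<Sum>t. \<gamma> ^ t) * ?c"
    using \<gamma> by (simp add: shift_invariant suminf_mult2)
  also have "\<dots> = ?c / (1 - \<gamma>)"
    using \<gamma> by (simp add: suminf_geometric)
  finally show ?thesis .
qed

section \<open>Environments with state-independent transitions\<close>

definition step_pmf :: "nat pmf \<Rightarrow> policy \<Rightarrow> (nat \<times> nat) pmf" where
  "step_pmf I \<pi> = bind_pmf I (\<lambda>s. map_pmf (Pair s) (\<pi> s))"

lemma set_pmf_step_pmf: "set_pmf (step_pmf I \<pi>) = (SIGMA s:set_pmf I. set_pmf (\<pi> s))"
  by (auto simp: step_pmf_def)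

lemma pmf_step_pmf: "pmf (step_pmf I \<pi>) (s, a) = pmf I s * pmf (\<pi> s) a"
proof -
  have "pmf (map_pmf (Pair x) (\<pi> x)) (s, a) = (if x = s then pmf (\<pi> s) a else 0)" for x
    by (cases "x = s") (auto simp: pmf_map_inj' inj_def pmf_eq_0_set_pmf)
  then have "pmf (step_pmf I \<pi>) (s, a) = (\<integral>x. (if x = s then pmf (\<pi> s) a else 0) \<partial>measure_pmf I)"
    by (simp add: step_pmf_def pmf_bind)
  also have "\<dots> = (\<Sum>y\<in>{s}. (if y = s then pmf (\<pi> s) a else 0) * pmf I y)"
    by (rule integral_measure_pmf_real) (auto split: if_splits)
  finally show ?thesis by simp
qed

lemma pref_prob_iid: "pref_prob \<pi> (\<lambda>_ _. I) I xs = prod_list (map (pmf (step_pmf I \<pi>)) xs)"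
  by (induction xs) (auto simp: pmf_step_pmf)

lemma traj_meas_iid:
  assumes iid: "Tr E = (\<lambda>_ _. In E)"
  shows "traj_meas E \<pi> = stream_space (measure_pmf (step_pmf (In E) \<pi>))"
proof -
  let ?S = "stream_space (measure_pmf (step_pmf (In E) \<pi>))"
  define P where "P M \<longleftrightarrow> prob_space M
      \<and> sets M = sets (stream_space (count_space UNIV))
      \<and> (\<forall>xs. emeasure M {\<omega> \<in> space M. stake (length xs) \<omega> = xs}
               = ennreal (pref_prob \<pi> (Tr E) (In E) xs))" for M
  have "P ?S"
    unfolding P_def iid
    by (simp add: prob_space.prob_space_stream_space[OF prob_space_measure_pmf]
        sets_stream_space_pmf emeasure_stream_space_pmf_stake pref_prob_iid)
  then have "P (traj_meas E \<pi>)"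
    unfolding traj_meas_def P_def[symmetric] by (rule someI)
  then have M: "prob_space (traj_meas E \<pi>)"
      "sets (traj_meas E \<pi>) = sets (stream_space (count_space UNIV))"
      "space (traj_meas E \<pi>) = UNIV"
      "\<And>xs. emeasure (traj_meas E \<pi>) (sstart UNIV xs) = emeasure ?S (sstart UNIV xs)"
    using \<open>P ?S\<close> sets_eq_imp_space_eq[of "traj_meas E \<pi>" "stream_space (count_space UNIV)"]
    by (simp_all add: P_def space_stream_space streams_UNIV sstart_UNIV space_stream_space_pmf)
  \<comment> \<open>probability measures agreeing on all cylinders coincide, so the choice in traj_meas is forced\<close>
  show ?thesis
    by (rule stream_space_eq_sstart[of UNIV])
      (simp_all add: M prob_space.prob_space_stream_space[OF prob_space_measure_pmf]
        sets_stream_space_pmf streams_UNIV)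
qed

lemma abs_rew_in_le:
  assumes "finite (St E)" "finite (Ac E)"
  shows "\<bar>rew_in E R s a s'\<bar> \<le> (\<Sum>(s, a, s')\<in>St E \<times> Ac E \<times> St E. \<bar>R s a s'\<bar>)"
proof (cases "s \<in> St E \<and> a \<in> Ac E \<and> s' \<in> St E")
  case True
  then have "\<bar>rew_in E R s a s'\<bar> = (\<lambda>(s, a, s'). \<bar>R s a s'\<bar>) (s, a, s')"
    by (simp add: rew_in_def)
  also have "\<dots> \<le> (\<Sum>(s, a, s')\<in>St E \<times> Ac E \<times> St E. \<bar>R s a s'\<bar>)"
    by (rule member_le_sum) (use True assms in auto)
  finally show ?thesis .
qed (auto simp: rew_in_def intro: sum_nonneg)

definition rrl_gain ::
    "env \<Rightarrow> (nat \<Rightarrow> nat \<Rightarrow> nat \<Rightarrow> real) \<Rightarrow> real \<Rightarrow> (nat pmf \<Rightarrow> real) \<Rightarrow> policy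
       \<Rightarrow> nat \<times> nat \<Rightarrow> nat \<Rightarrow> real" where
  "rrl_gain E R \<alpha> F \<pi> x s' =
     rew_in E R (fst x) (snd x) s' - \<alpha> * (if fst x \<in> St E then F (\<pi> (fst x)) else 0)"

lemma abs_rrl_gain_le:
  assumes "finite (St E)" "finite (Ac E)"
  shows "\<bar>rrl_gain E R \<alpha> F \<pi> x s'\<bar>
    \<le> (\<Sum>(s, a, s')\<in>St E \<times> Ac E \<times> St E. \<bar>R s a s'\<bar>) + \<bar>\<alpha>\<bar> * (\<Sum>s\<in>St E. \<bar>F (\<pi> s)\<bar>)"
proof -
  have "\<bar>(if s \<in> St E then F (\<pi> s) else 0)\<bar> \<le> (\<Sum>s\<in>St E. \<bar>F (\<pi> s)\<bar>)" for s
    using member_le_sum[of s "St E" "\<lambda>s. \<bar>F (\<pi> s)\<bar>"] assms by (auto intro: sum_nonneg)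
  then have "\<bar>\<alpha> * (if s \<in> St E then F (\<pi> s) else 0)\<bar> \<le> \<bar>\<alpha>\<bar> * (\<Sum>s\<in>St E. \<bar>F (\<pi> s)\<bar>)" for s
    by (simp add: abs_mult mult_left_mono)
  then show ?thesis
    unfolding rrl_gain_def using abs_rew_in_le[OF assms, of R] by (smt (verit) abs_triangle_ineq4)
qed

lemma J_RRL_iid:
  assumes iid: "Tr E = (\<lambda>_ _. In E)" and fin: "finite (St E)" "finite (Ac E)"
    and \<gamma>: "0 \<le> \<gamma>" "\<gamma> < 1"
  shows "J_RRL E R \<alpha> F \<gamma> \<pi> = (\<integral>z. rrl_gain E R \<alpha> F \<pi> (fst z) (fst (fst (snd z)))
           \<partial>measure_pmf (pair_pmf (step_pmf (In E) \<pi>) (pair_pmf (step_pmf (In E) \<pi>) (step_pmf (In E) \<pi>))))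
         / (1 - \<gamma>)"
proof -
  let ?S = "stream_space (measure_pmf (step_pmf (In E) \<pi>))"
  define G where "G \<omega> = rrl_gain E R \<alpha> F \<pi> (\<omega> !! 0) (fst (\<omega> !! 1))" for \<omega> :: traj
  obtain K where "\<And>\<omega>. \<bar>G \<omega>\<bar> \<le> K"
    unfolding G_def using abs_rrl_gain_le[OF fin] by blast
  moreover have "G \<in> borel_measurable ?S"
    unfolding G_def by measurable
  moreover have "(\<Sum>t. \<gamma> ^ t * (rew_in E R (st \<omega> t) (ac \<omega> t) (st \<omega> (Suc t))
        - \<alpha> * (if st \<omega> t \<in> St E then F (\<pi> (st \<omega> t)) else 0))) = (\<Sum>t. \<gamma> ^ t * G (sdrop t \<omega>))" for \<omega>
    by (simp add: G_def rrl_gain_def st_def ac_def cong: if_cong)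
  ultimately have "J_RRL E R \<alpha> F \<gamma> \<pi> = (\<integral>\<omega>. G \<omega> \<partial>?S) / (1 - \<gamma>)"
    using integral_discounted_shift[of G _ K \<gamma>] \<gamma> by (simp add: J_RRL_def traj_meas_iid[OF iid])
  also have "(\<integral>\<omega>. G \<omega> \<partial>?S)
      = (\<integral>\<omega>. rrl_gain E R \<alpha> F \<pi> (fst (first3 \<omega>)) (fst (fst (snd (first3 \<omega>)))) \<partial>?S)"
    by (simp add: G_def first3_def)
  also have "\<dots> = (\<integral>z. rrl_gain E R \<alpha> F \<pi> (fst z) (fst (fst (snd z)))
           \<partial>measure_pmf (pair_pmf (step_pmf (In E) \<pi>) (pair_pmf (step_pmf (In E) \<pi>) (step_pmf (In E) \<pi>))))"
    by (rule integral_first3)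
  finally show ?thesis .
qed

section \<open>The fair-coin environment\<close>

definition coin :: "nat pmf" where
  "coin = pmf_of_set {0, 1}"

definition coin_env :: env where
  "coin_env = \<lparr>St = {0, 1}, Ac = {0, 1}, Tr = (\<lambda>_ _. coin), In = coin\<rparr>"

lemma coin_env_simps [simp]:
  "St coin_env = {0, 1}" "Ac coin_env = {0, 1}" "Tr coin_env = (\<lambda>_ _. coin)" "In coin_env = coin"
  by (simp_all add: coin_env_def)

lemma set_pmf_coin [simp]: "set_pmf coin = {0, 1}"
  by (simp add: coin_def)

lemma pmf_coin: "pmf coin s = (if s \<in> {0, 1} then 1 / 2 else 0)"
  by (simp add: coin_def)

lemma valid_coin_env: "valid_env coin_env"
  by (simp add: valid_env_def)

lemma traj_meas_coin_env: "traj_meas coin_env \<pi> = stream_space (measure_pmf (step_pmf coin \<pi>))"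
  by (simp add: traj_meas_iid)

lemma Pol_coin_env: "\<pi> \<in> Pol coin_env \<longleftrightarrow> set_pmf (\<pi> 0) \<subseteq> {0, 1} \<and> set_pmf (\<pi> 1) \<subseteq> {0, 1}"
  by (simp add: Pol_def)

definition act1_prob :: "policy \<Rightarrow> real" where
  "act1_prob \<pi> = (pmf (\<pi> 0) 1 + pmf (\<pi> 1) 1) / 2"

lemma prob_step_pmf_act1:
  "measure_pmf.prob (step_pmf coin \<pi>) ({0, 1} \<times> {1}) = act1_prob \<pi>"
  by (simp add: measure_measure_pmf_finite pmf_step_pmf pmf_coin act1_prob_def)

lemma prob_step_pmf_act0:
  assumes "\<pi> \<in> Pol coin_env"
  shows "measure_pmf.prob (step_pmf coin \<pi>) ({0, 1} \<times> {0}) = 1 - act1_prob \<pi>"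
proof -
  have "pmf (\<pi> s) 0 = 1 - pmf (\<pi> s) 1" if "s \<in> {0, 1}" for s
  proof -
    have "(\<Sum>a\<in>{0, 1::nat}. pmf (\<pi> s) a) = 1"
      by (rule sum_pmf_eq_1) (use assms that in \<open>auto simp: Pol_coin_env\<close>)
    then show ?thesis by simp
  qed
  from this[of 0] this[of 1] show ?thesis
    by (simp add: measure_measure_pmf_finite pmf_step_pmf pmf_coin act1_prob_def field_simps)
qed

lemma prob_step_pmf_state: "measure_pmf.prob (step_pmf coin \<pi>) ({0, 1} \<times> UNIV) = 1"
  by (subst measure_pmf.prob_eq_1) (auto simp: AE_measure_pmf_iff set_pmf_step_pmf)

definition action_is :: "nat \<Rightarrow> (nat \<times> nat \<times> nat) ltlf" where
  "action_is a = OrF (OrF (Atom (0, a, 0)) (Atom (0, a, 1))) (OrF (Atom (1, a, 0)) (Atom (1, a, 1)))"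

definition act1_then_act0 :: "(nat \<times> nat \<times> nat) ltlf" where
  "act1_then_act0 = AndF (action_is 1) (NextF (action_is 0))"

lemma holds_action_is:
  "holds (action_is a) \<omega> t \<longleftrightarrow> st \<omega> t \<in> {0, 1} \<and> ac \<omega> t = a \<and> st \<omega> (Suc t) \<in> {0, 1}"
  by (auto simp: action_is_def)

lemma J_LTL_act1_then_act0:
  assumes "\<pi> \<in> Pol coin_env"
  shows "J_LTL coin_env act1_then_act0 \<pi> = act1_prob \<pi> * (1 - act1_prob \<pi>)"
proof -
  let ?D = "step_pmf coin \<pi>"
  let ?A = "({0, 1} \<times> {1}) \<times> ({0, 1} \<times> {0}) \<times> ({0, 1} \<times> UNIV) :: ((nat \<times> nat) \<times> _) set"
  have "(if holds act1_then_act0 \<omega> 0 then 1 else 0 :: real) = indicator ?A (first3 \<omega>)" for \<omega>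
    by (auto simp: act1_then_act0_def holds_action_is first3_def st_def ac_def numeral_2_eq_2
        mem_Times_iff simp del: insert_Times_insert split: split_indicator)
  then have "J_LTL coin_env act1_then_act0 \<pi>
      = (\<integral>\<omega>. indicator ?A (first3 \<omega>) \<partial>stream_space (measure_pmf ?D))"
    by (simp add: J_LTL_def traj_meas_coin_env)
  also have "\<dots> = measure_pmf.prob (pair_pmf ?D (pair_pmf ?D ?D)) ?A"
    by (simp add: integral_first3)
  also have "\<dots> = measure_pmf.prob ?D ({0, 1} \<times> {1})
      * (measure_pmf.prob ?D ({0, 1} \<times> {0}) * measure_pmf.prob ?D ({0, 1} \<times> UNIV))"
    by (simp add: measure_pmf_prob_product del: insert_Times_insert)
  also have "\<dots> = act1_prob \<pi> * (1 - act1_prob \<pi>)"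
    by (simp only: prob_step_pmf_act1 prob_step_pmf_act0[OF assms] prob_step_pmf_state)
  finally show ?thesis .
qed

definition act1_reward :: "nat \<Rightarrow> nat \<Rightarrow> nat \<Rightarrow> real" where
  "act1_reward s a s' = of_bool (a = 1)"

lemma J_MR_act1_reward: "J_MR coin_env act1_reward 0 \<pi> = act1_prob \<pi>"
proof -
  let ?D = "step_pmf coin \<pi>"
  let ?A = "({0, 1} \<times> {1}) \<times> ({0, 1} \<times> UNIV) \<times> UNIV :: ((nat \<times> nat) \<times> _) set"
  have "(\<Sum>t. 0 ^ t * g t) = (g 0 :: real)" for g
    by (subst suminf_finite[of "{0}"]) auto
  moreover have "rew_in coin_env act1_reward (st \<omega> 0) (ac \<omega> 0) (st \<omega> 1)
      = indicator ?A (first3 \<omega>)" for \<omega>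
    by (auto simp: rew_in_def act1_reward_def first3_def st_def ac_def mem_Times_iff
        simp del: insert_Times_insert split: split_indicator)
  ultimately have "J_MR coin_env act1_reward 0 \<pi>
      = (\<integral>\<omega>. indicator ?A (first3 \<omega>) \<partial>stream_space (measure_pmf ?D))"
    by (simp add: J_MR_def traj_meas_coin_env)
  also have "\<dots> = measure_pmf.prob (pair_pmf ?D (pair_pmf ?D ?D)) ?A"
    by (simp add: integral_first3)
  also have "\<dots> = measure_pmf.prob ?D ({0, 1} \<times> {1}) * (measure_pmf.prob ?D ({0, 1} \<times> UNIV) * 1)"
    by (simp add: measure_pmf_prob_product del: insert_Times_insert UNIV_Times_UNIV)
  also have "\<dots> = act1_prob \<pi>"
    by (simp only: prob_step_pmf_act1 prob_step_pmf_state)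
  finally show ?thesis .
qed

lemma LTL_order_in_Ord_ONMR: "induced_ord coin_env (J_LTL coin_env act1_then_act0) \<in> Ord_ONMR coin_env"
proof -
  have "induced_ord coin_env (J_LTL coin_env act1_then_act0)
      = induced_ord coin_env (J_ONMR coin_env act1_reward (\<lambda>y. y * (1 - y)) 0)"
    by (rule induced_ord_cmult[where c = 1]) (simp_all add: J_ONMR_def J_MR_act1_reward J_LTL_act1_then_act0)
  moreover have "induced_ord coin_env (J_ONMR coin_env act1_reward (\<lambda>y. y * (1 - y)) 0) \<in> Ord_ONMR coin_env"
    unfolding Ord_ONMR_def by (intro CollectI exI[of _ act1_reward] exI[of _ "\<lambda>y. y * (1 - y)"] exI[of _ 0]) simp
  ultimately show ?thesis by simp
qed

(* Machine state 1 records that the first transition played action 1; state 2 is an absorbing sink. *)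
definition rm_trans :: "nat \<Rightarrow> nat \<Rightarrow> nat \<Rightarrow> nat \<Rightarrow> nat" where
  "rm_trans u s a s' = (if u = 0 \<and> s \<in> {0, 1} \<and> a = 1 \<and> s' \<in> {0, 1} then 1 else 2)"

definition rm_reward :: "nat \<Rightarrow> nat \<Rightarrow> nat \<Rightarrow> nat \<Rightarrow> nat \<Rightarrow> real" where
  "rm_reward u v = (if u = 1 then (\<lambda>s a s'. if a = 0 then 1 else 0) else (\<lambda>_ _ _. 0))"

lemma rm_state_absorbed: "rm_state 0 rm_trans \<omega> (Suc (Suc t)) = 2"
  by (induction t) (auto simp: rm_trans_def)

lemma J_RM_act1_then_act0:
  "J_RM coin_env 0 rm_trans rm_reward (1 / 2) \<pi> = J_LTL coin_env act1_then_act0 \<pi> / 2"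
proof -
  let ?r = "\<lambda>\<omega> t. rew_in coin_env (rm_reward (rm_state 0 rm_trans \<omega> t) (rm_state 0 rm_trans \<omega> (Suc t)))
      (st \<omega> t) (ac \<omega> t) (st \<omega> (Suc t))"
  have "?r \<omega> t = 0" if "t \<noteq> 1" for \<omega> t
  proof (cases t)
    case (Suc t')
    with that obtain t'' where "t = Suc (Suc t'')" by (cases t') auto
    then show ?thesis by (simp add: rm_state_absorbed rm_reward_def rew_in_def del: rm_state.simps)
  qed (simp add: rm_reward_def rew_in_def)
  then have discounted:
    "(\<Sum>t. (1 / 2) ^ t * ?r \<omega> t) = (1 / 2) * (if holds act1_then_act0 \<omega> 0 then 1 else 0)" for \<omega>
    by (subst suminf_finite[of "{1}"])
      (auto simp: rm_reward_def rm_trans_def rew_in_def act1_then_act0_def holds_action_is)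
  show ?thesis
    unfolding J_RM_def J_LTL_def discounted by simp
qed

lemma LTL_order_in_Ord_RM: "induced_ord coin_env (J_LTL coin_env act1_then_act0) \<in> Ord_RM coin_env"
proof -
  have "induced_ord coin_env (J_LTL coin_env act1_then_act0)
      = induced_ord coin_env (J_RM coin_env 0 rm_trans rm_reward (1 / 2))"
    by (rule induced_ord_cmult[where c = 2]) (simp_all add: J_RM_act1_then_act0)
  moreover have "induced_ord coin_env (J_RM coin_env 0 rm_trans rm_reward (1 / 2)) \<in> Ord_RM coin_env"
    unfolding Ord_RM_def
    by (intro CollectI exI[of _ "{0, 1, 2}"] exI[of _ 0] exI[of _ rm_trans] exI[of _ rm_reward]
        exI[of _ "1 / 2"]) (auto simp: rm_trans_def)
  ultimately show ?thesis by simp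
qed

definition det_pol :: "nat \<Rightarrow> nat \<Rightarrow> policy" where
  "det_pol p q = (\<lambda>s. return_pmf (if s = 0 then p else q))"

lemma det_pol_in_Pol: "p \<in> {0, 1} \<Longrightarrow> q \<in> {0, 1} \<Longrightarrow> det_pol p q \<in> Pol coin_env"
  by (auto simp: Pol_def det_pol_def)

lemma act1_prob_det_pol: "act1_prob (det_pol p q) = (of_bool (p = 1) + of_bool (q = 1)) / 2"
  by (simp add: act1_prob_def det_pol_def indicator_def)

lemma J_RRL_det_pol_separable:
  assumes "0 \<le> \<gamma>" "\<gamma> < 1"
  shows "\<exists>u v. \<forall>p q. J_RRL coin_env R \<alpha> F \<gamma> (det_pol p q) = u p + v q"
proof -
  define w where "w s p = (rew_in coin_env R s p 0 + rew_in coin_env R s p 1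
      - 2 * \<alpha> * F (return_pmf p)) / 4" for s p
  have "J_RRL coin_env R \<alpha> F \<gamma> (det_pol p q) = w 0 p / (1 - \<gamma>) + w 1 q / (1 - \<gamma>)" for p q
  proof -
    let ?D = "step_pmf coin (det_pol p q)"
    let ?g = "\<lambda>z. rrl_gain coin_env R \<alpha> F (det_pol p q) (fst z) (fst (fst (snd z)))"
    have D: "set_pmf ?D = {(0, p), (1, q)}" "pmf ?D (0, p) = 1 / 2" "pmf ?D (Suc 0, q) = 1 / 2"
      by (auto simp: set_pmf_step_pmf pmf_step_pmf pmf_coin det_pol_def)
    have \<pi>: "det_pol p q 0 = return_pmf p" "det_pol p q (Suc 0) = return_pmf q"
      by (simp_all add: det_pol_def)
    have "(\<integral>z. ?g z \<partial>measure_pmf (pair_pmf ?D (pair_pmf ?D ?D)))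
        = (\<Sum>z\<in>{(0, p), (1, q)} \<times> {(0, p), (1, q)} \<times> {(0::nat, p), (1, q)}.
             ?g z * pmf (pair_pmf ?D (pair_pmf ?D ?D)) z)"
      by (rule integral_measure_pmf_real) (simp_all add: set_pair_pmf D)
    also have "\<dots> = w 0 p + w 1 q"
      by (simp add: sum.cartesian_product[symmetric] pmf_pair D \<pi> rrl_gain_def w_def field_simps)
    finally show ?thesis
      using assms by (simp add: J_RRL_iid add_divide_distrib)
  qed
  then show ?thesis
    by (intro exI[of _ "\<lambda>p. w 0 p / (1 - \<gamma>)"] exI[of _ "\<lambda>q. w 1 q / (1 - \<gamma>)"]) simp
qed

lemma LTL_order_notin_Ord_RRL:
  "induced_ord coin_env (J_LTL coin_env act1_then_act0) \<notin> Ord_RRL coin_env"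
proof
  assume "induced_ord coin_env (J_LTL coin_env act1_then_act0) \<in> Ord_RRL coin_env"
  then obtain R \<alpha> F \<gamma> where \<gamma>: "0 \<le> \<gamma>" "\<gamma> < 1"
    and eq: "induced_ord coin_env (J_LTL coin_env act1_then_act0) = induced_ord coin_env (J_RRL coin_env R \<alpha> F \<gamma>)"
    unfolding Ord_RRL_def by blast
  obtain u v where J: "\<And>p q. J_RRL coin_env R \<alpha> F \<gamma> (det_pol p q) = u p + v q"
    using J_RRL_det_pol_separable[OF \<gamma>] by blast
  have L: "J_LTL coin_env act1_then_act0 (det_pol p q) = (if p = q then 0 else 1 / 4)"
    if "p \<in> {0, 1}" "q \<in> {0, 1}" for p q
    using that by (auto simp: J_LTL_act1_then_act0 det_pol_in_Pol act1_prob_det_pol)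
  have "J_RRL coin_env R \<alpha> F \<gamma> (det_pol p' q') \<le> J_RRL coin_env R \<alpha> F \<gamma> (det_pol p q)
      \<longleftrightarrow> (p' = q' \<or> p \<noteq> q)"
    if "p \<in> {0, 1}" "q \<in> {0, 1}" "p' \<in> {0, 1}" "q' \<in> {0, 1}" for p q p' q'
    using induced_ord_eq_iff[OF eq det_pol_in_Pol[OF that(1,2)] det_pol_in_Pol[OF that(3,4)]] L that
    by auto
  \<comment> \<open>(0,0) ~ (1,1) and (0,1) ~ (1,0) force u 0 - u 1 = v 1 - v 0 = v 0 - v 1, against (0,1) > (0,0)\<close>
  from this[of 0 0 1 1] this[of 1 1 0 0] this[of 0 1 1 0] this[of 1 0 0 1] this[of 0 0 0 1]
  show False
    unfolding J by simp
qed

theorem mainTheorem11: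
  shows "\<exists>E r. valid_env E \<and> total_preorder_on (Pol E) r
           \<and> r \<in> Ord_RM E \<inter> Ord_ONMR E \<inter> Ord_LTL E
           \<and> r \<notin> Ord_MR E \<union> Ord_RRL E"
proof (intro exI conjI)
  let ?r = "induced_ord coin_env (J_LTL coin_env act1_then_act0)"
  show "valid_env coin_env" by (rule valid_coin_env)
  show "total_preorder_on (Pol coin_env) ?r" by (rule total_preorder_on_induced_ord)
  have "?r \<in> Ord_LTL coin_env"
    unfolding Ord_LTL_def by (intro CollectI exI[of _ act1_then_act0]) (auto simp: act1_then_act0_def action_is_def)
  then show "?r \<in> Ord_RM coin_env \<inter> Ord_ONMR coin_env \<inter> Ord_LTL coin_env"
    using LTL_order_in_Ord_RM LTL_order_in_Ord_ONMR by simp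
  show "?r \<notin> Ord_MR coin_env \<union> Ord_RRL coin_env"
    using LTL_order_notin_Ord_RRL Ord_MR_subset_Ord_RRL by blast
qed

end
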